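(* Let $G=(V,E)$ be a directed graph, $s\neq t$ vertices, $k\ge 1$ an integer and $v\in V$. Then $e(s,v)\in E$ and $EV^*_{k-1}(v,t)$ exists if and only if $e(s,v)$ is an edge of $SPG_k(s,t)$.
   Context: A path from $x$ to $y$ in $G$ is a vertex sequence $x=v_0,\dots,v_m=y$ with $(v_{i-1},v_i)\in E$; its length is $m$ and $V(p)$, $E(p)$ are its vertex and edge sets. A simple path has no repeated vertex. $SPG_k(s,t)$ is the subgraph of $G$ formed by the union of vertex sets and edge sets of all simple paths from $s$ to $t$ of length at most $k$. $EV^*_l(v,t)$ exists iff there is at least one simple path from $v$ to $t$ of length at most $l$ not containing $s$, and then it is the intersection of $V(p)$ over all such paths. *)

theory Defs
  imports Main
begin

text \<open>A directed graph is given by its edge relation E; vertices are elements of type 'a.\<close>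

definition path_edges :: "'a list \<Rightarrow> ('a \<times> 'a) set" where
  "path_edges xs = set (zip xs (tl xs))"

definition is_path :: "('a \<times> 'a) set \<Rightarrow> 'a \<Rightarrow> 'a \<Rightarrow> 'a list \<Rightarrow> bool" where
  "is_path E x y xs \<longleftrightarrow> xs \<noteq> [] \<and> hd xs = x \<and> last xs = y \<and> path_edges xs \<subseteq> E"

definition path_len :: "'a list \<Rightarrow> nat" where
  "path_len xs = length xs - 1"

definition is_simple_path :: "('a \<times> 'a) set \<Rightarrow> 'a \<Rightarrow> 'a \<Rightarrow> 'a list \<Rightarrow> bool" where
  "is_simple_path E x y xs \<longleftrightarrow> is_path E x y xs \<and> distinct xs"

definition SPG_vertices :: "('a \<times> 'a) set \<Rightarrow> nat \<Rightarrow> 'a \<Rightarrow> 'a \<Rightarrow> 'a set" where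
  "SPG_vertices E k s t =
     (\<Union> {set p | p. is_simple_path E s t p \<and> path_len p \<le> k})"

definition SPG_edges :: "('a \<times> 'a) set \<Rightarrow> nat \<Rightarrow> 'a \<Rightarrow> 'a \<Rightarrow> ('a \<times> 'a) set" where
  "SPG_edges E k s t =
     (\<Union> {path_edges p | p. is_simple_path E s t p \<and> path_len p \<le> k})"

definition EVstar_paths :: "('a \<times> 'a) set \<Rightarrow> 'a \<Rightarrow> nat \<Rightarrow> 'a \<Rightarrow> 'a \<Rightarrow> 'a list set" where
  "EVstar_paths E s l v t = {p. is_simple_path E v t p \<and> path_len p \<le> l \<and> s \<notin> set p}"

definition EVstar_exists :: "('a \<times> 'a) set \<Rightarrow> 'a \<Rightarrow> nat \<Rightarrow> 'a \<Rightarrow> 'a \<Rightarrow> bool" where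
  "EVstar_exists E s l v t \<longleftrightarrow> EVstar_paths E s l v t \<noteq> {}"

definition EVstar :: "('a \<times> 'a) set \<Rightarrow> 'a \<Rightarrow> nat \<Rightarrow> 'a \<Rightarrow> 'a \<Rightarrow> 'a set" where
  "EVstar E s l v t = (\<Inter> p \<in> EVstar_paths E s l v t. set p)"

end

theory Submission
  imports Defs
begin

lemma path_edges_singleton [simp]: "path_edges [x] = {}"
  by (simp add: path_edges_def)

lemma path_edges_Cons_Cons [simp]:
  "path_edges (x # y # p) = insert (x, y) (path_edges (y # p))"
  by (simp add: path_edges_def)

lemma path_edges_fst_in_set: "(a, b) \<in> path_edges p \<Longrightarrow> a \<in> set p"
  by (auto simp: path_edges_def dest: set_zip_leftD)

lemma path_len_Cons [simp]: "path_len (x # p) = length p"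
  by (simp add: path_len_def)

lemma is_path_obtain_Cons:
  assumes "is_path E x y p"
  obtains r where "p = x # r"
  using assms by (cases p) (auto simp: is_path_def)

lemma is_simple_path_Cons_Cons:
  "is_simple_path E x y (x # z # p) \<longleftrightarrow>
     (x, z) \<in> E \<and> x \<notin> set (z # p) \<and> is_simple_path E z y (z # p)"
  by (auto simp: is_simple_path_def is_path_def)

text \<open>On a simple path the start vertex is left only once, so the first edge is the only
  edge of the path leaving it.\<close>

lemma simple_path_edge_from_start:
  assumes "is_simple_path E s t p" and "(s, v) \<in> path_edges p"
  obtains r where "p = s # v # r"
proof -
  from assms(1) have "is_path E s t p"
    by (simp add: is_simple_path_def)
  then obtain q where p: "p = s # q"
    by (rule is_path_obtain_Cons)
  with assms(2) obtain a r where q: "q = a # r"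
    by (cases q) auto
  have "a = v"
  proof (rule ccontr)
    assume "a \<noteq> v"
    then have "(s, v) \<in> path_edges q"
      using assms(2) p q by simp
    then have "s \<in> set q"
      by (rule path_edges_fst_in_set)
    then show False
      using assms(1) p unfolding is_simple_path_def by simp
  qed
  with p q show thesis
    using that by simp
qed

lemma mem_SPG_edges_iff:
  "e \<in> SPG_edges E k s t \<longleftrightarrow>
     (\<exists>p. is_simple_path E s t p \<and> path_len p \<le> k \<and> e \<in> path_edges p)"
  unfolding SPG_edges_def by auto

lemma EVstar_exists_iff:
  "EVstar_exists E s l v t \<longleftrightarrow>
     (\<exists>p. is_simple_path E v t p \<and> path_len p \<le> l \<and> s \<notin> set p)"
  unfolding EVstar_exists_def EVstar_paths_def by auto

theorem lemma4p4:
  fixes E :: "('a \<times> 'a) set" and s t v :: 'a and k :: nat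
  assumes "s \<noteq> t" and "k \<ge> 1"
  shows "((s, v) \<in> E \<and> EVstar_exists E s (k - 1) v t) \<longleftrightarrow> (s, v) \<in> SPG_edges E k s t"
proof
  assume "(s, v) \<in> E \<and> EVstar_exists E s (k - 1) v t"
  then obtain p where edge: "(s, v) \<in> E"
    and p: "is_simple_path E v t p" "path_len p \<le> k - 1" "s \<notin> set p"
    by (auto simp: EVstar_exists_iff)
  from p(1) have "is_path E v t p"
    by (simp add: is_simple_path_def)
  then obtain r where r: "p = v # r"
    by (rule is_path_obtain_Cons)
  have "is_simple_path E s t (s # v # r)"
    using edge p(1,3) r by (simp add: is_simple_path_Cons_Cons)
  moreover have "path_len (s # v # r) \<le> k"
    using p(2) r assms(2) by simp
  ultimately show "(s, v) \<in> SPG_edges E k s t"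
    unfolding mem_SPG_edges_iff by (intro exI[of _ "s # v # r"]) simp
next
  assume "(s, v) \<in> SPG_edges E k s t"
  then obtain p where p: "is_simple_path E s t p" "path_len p \<le> k" "(s, v) \<in> path_edges p"
    unfolding mem_SPG_edges_iff by blast
  from p(1,3) obtain r where "p = s # v # r"
    by (rule simple_path_edge_from_start)
  with p(1,2) show "(s, v) \<in> E \<and> EVstar_exists E s (k - 1) v t"
    by (auto simp: EVstar_exists_iff is_simple_path_Cons_Cons)
qed

end
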